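(* Let $\mathcal K=\{\mathbf x\in\mathbb R^n : \mathbf k_i^T\mathbf x\ge 0,\ i=1,\dots,p\}$ be a polyhedral cone with non-empty topological interior, where each $\mathbf k_i$ has unit Euclidean length, and let $z_\infty$ be the inradius of $\mathcal K$. Define linear programs as follows. Problem $P_0$: maximize $z$ over $(\mathbf x,z)\in\mathbb R^n\times\mathbb R$ subject to $\mathbf k_i^T\mathbf x\ge z$ for all $i$ and $-1\le x_i\le 1$ for all $i=1,\dots,n$. Given Problem $P_\ell$, let $(\mathbf x_\ell,z_\ell)$ be an (arbitrarily chosen) optimal solution of $P_\ell$, let $\mathbf u_\ell=\mathbf x_\ell/\|\mathbf x_\ell\|$, and let Problem $P_{\ell+1}$ be Problem $P_\ell$ with the additional constraint $\mathbf u_\ell^T\mathbf x\le 1$. Let $w_\ell=z_\ell/\|\mathbf x_\ell\|$. Then \[ z_0\ge z_1\ge\cdots\ge z_\ell\ge\cdots\ge z_\infty, \] and for any nonnegative integers $m$ and $n'$ we have $z_m\ge z_\infty\ge w_{n'}$.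
   Context: $B_r(\mathbf x)=\{\mathbf y\in\mathbb R^n:\|\mathbf x-\mathbf y\|\le r\}$ denotes the closed ball, with $\|\cdot\|$ the Euclidean norm. The insphere of a polyhedral cone $\mathcal K$ is the largest ball contained in $\mathcal K$ whose center lies in $B_1(\mathbf 0)$, and the inradius is its radius. (For each $\ell$, problem $P_\ell$ has an optimal solution and $\|\mathbf x_\ell\|\ge 1$, so $\mathbf u_\ell$ is well defined.) *)

theory Defs
  imports "HOL-Analysis.Analysis"
begin

definition poly_cone :: "(nat \<Rightarrow> real^'n) \<Rightarrow> nat \<Rightarrow> (real^'n) set" where
  "poly_cone k p = {x. \<forall>i\<in>{1..p}. 0 \<le> k i \<bullet> x}"

definition inradius :: "(real^'n) set \<Rightarrow> real" where
  "inradius K = (GREATEST r. 0 \<le> r \<and> (\<exists>c. norm c \<le> 1 \<and> cball c r \<subseteq> K))"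

text \<open>Feasible set of problem P_l, where u j (j < l) are the added cut directions.\<close>
definition LP_feasible ::
  "(nat \<Rightarrow> real^'n) \<Rightarrow> nat \<Rightarrow> (nat \<Rightarrow> real^'n) \<Rightarrow> nat \<Rightarrow> ((real^'n) \<times> real) set" where
  "LP_feasible k p u l = {xz. (\<forall>i\<in>{1..p}. snd xz \<le> k i \<bullet> fst xz)
      \<and> (\<forall>i. -1 \<le> fst xz $ i \<and> fst xz $ i \<le> 1)
      \<and> (\<forall>j<l. u j \<bullet> fst xz \<le> 1)}"

definition LP_optimal ::
  "(nat \<Rightarrow> real^'n) \<Rightarrow> nat \<Rightarrow> (nat \<Rightarrow> real^'n) \<Rightarrow> nat \<Rightarrow> real^'n \<Rightarrow> real \<Rightarrow> bool" where
  "LP_optimal k p u l x z \<longleftrightarrow> (x, z) \<in> LP_feasible k p u l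
      \<and> (\<forall>yw \<in> LP_feasible k p u l. snd yw \<le> z)"

end

theory Submission
  imports Defs
begin

text \<open>The feasible sets of the problems P_l shrink as l grows, so the optimal values z_l
decrease. A ball of radius r centred at c lies in the cone iff r \<le> k_i \<bullet> c for all i, so
(c, r) for the insphere is feasible for every P_l: its centre lies in the unit ball, hence in
the box, and the cuts u_l have norm at most 1; thus z_l is at least the inradius. Conversely,
dividing an optimal (x_l, z_l) by the norm of x_l gives the centre and radius w_l of a ball
inside the cone with centre on the unit sphere, so w_l is at most the inradius. The inradius
exists by compactness as soon as there is one constraint.\<close>

lemma cball_subset_poly_cone_iff:
  fixes k :: "nat \<Rightarrow> real^'n"
  assumes unit: "\<forall>i\<in>{1..p}. norm (k i) = 1" and "0 \<le> r"
  shows "cball c r \<subseteq> poly_cone k p \<longleftrightarrow> (\<forall>i\<in>{1..p}. r \<le> k i \<bullet> c)"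
proof
  assume sub: "cball c r \<subseteq> poly_cone k p"
  show "\<forall>i\<in>{1..p}. r \<le> k i \<bullet> c"
  proof
    fix i assume i: "i \<in> {1..p}"
    have "c - r *\<^sub>R k i \<in> cball c r" using unit i \<open>0 \<le> r\<close> by (simp add: dist_norm)
    then have "0 \<le> k i \<bullet> (c - r *\<^sub>R k i)" using sub i unfolding poly_cone_def by blast
    moreover have "k i \<bullet> k i = 1" using unit i by (simp add: dot_square_norm)
    ultimately show "r \<le> k i \<bullet> c" by (simp add: inner_diff_right)
  qed
next
  assume dist: "\<forall>i\<in>{1..p}. r \<le> k i \<bullet> c"
  show "cball c r \<subseteq> poly_cone k p"
    unfolding poly_cone_def
  proof (intro subsetI CollectI ballI)
    fix x i assume x: "x \<in> cball c r" and i: "i \<in> {1..p}"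
    have "\<bar>k i \<bullet> (x - c)\<bar> \<le> norm (k i) * norm (x - c)" by (rule Cauchy_Schwarz_ineq2)
    also have "\<dots> \<le> r" using unit i x by (simp add: dist_norm norm_minus_commute)
    finally have "k i \<bullet> c - r \<le> k i \<bullet> x" by (simp add: inner_diff_right abs_le_iff)
    moreover have "r \<le> k i \<bullet> c" using dist i by blast
    ultimately show "0 \<le> k i \<bullet> x" by linarith
  qed
qed

definition inball_params :: "(nat \<Rightarrow> real^'n) \<Rightarrow> nat \<Rightarrow> ((real^'n) \<times> real) set" where
  "inball_params k p = {(c, r). norm c \<le> 1 \<and> 0 \<le> r \<and> (\<forall>i\<in>{1..p}. r \<le> k i \<bullet> c)}"

lemma compact_inball_params:
  fixes k :: "nat \<Rightarrow> real^'n"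
  assumes unit: "\<forall>i\<in>{1..p}. norm (k i) = 1" and "1 \<le> p"
  shows "compact (inball_params k p)"
proof -
  have eq: "inball_params k p = (cball 0 1 \<times> {0..}) \<inter>
      (\<Inter>i\<in>{1..p}. {y. snd y - k i \<bullet> fst y \<le> 0})"
    by (auto simp: inball_params_def)
  have "closed {y :: (real^'n) \<times> real. snd y - k i \<bullet> fst y \<le> 0}" for i
    by (intro closed_Collect_le continuous_intros)
  then have "closed (inball_params k p)"
    unfolding eq by (intro closed_Int closed_INT closed_Times) auto
  moreover have "inball_params k p \<subseteq> cball 0 1 \<times> {0..1}"
  proof clarify
    fix c r assume cr: "(c, r) \<in> inball_params k p"
    then have "r \<le> k 1 \<bullet> c" using \<open>1 \<le> p\<close> by (auto simp: inball_params_def)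
    also have "\<dots> \<le> norm (k 1) * norm c" by (rule norm_cauchy_schwarz)
    also have "\<dots> \<le> 1" using unit \<open>1 \<le> p\<close> cr by (auto simp: inball_params_def)
    finally show "c \<in> cball 0 1 \<and> r \<in> {0..1}" using cr by (auto simp: inball_params_def)
  qed
  then have "bounded (inball_params k p)"
    by (rule bounded_subset[rotated]) (intro bounded_Times bounded_cball bounded_closed_interval)
  ultimately show ?thesis by (simp add: compact_eq_bounded_closed)
qed

lemma inradius_attained:
  fixes k :: "nat \<Rightarrow> real^'n"
  assumes unit: "\<forall>i\<in>{1..p}. norm (k i) = 1" and "1 \<le> p"
  obtains c where "(c, inradius (poly_cone k p)) \<in> inball_params k p"
    and "\<And>c' r. (c', r) \<in> inball_params k p \<Longrightarrow> r \<le> inradius (poly_cone k p)"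
proof -
  have "compact (snd ` inball_params k p)"
    using compact_inball_params[OF assms] by (intro compact_continuous_image continuous_intros)
  moreover have "(0, 0) \<in> inball_params k p" by (simp add: inball_params_def)
  ultimately obtain c r where cr: "(c, r) \<in> inball_params k p"
    and max: "\<And>c' r'. (c', r') \<in> inball_params k p \<Longrightarrow> r' \<le> r"
    using compact_attains_sup[of "snd ` inball_params k p"] by fastforce
  have in_cone: "0 \<le> s \<and> (\<exists>c. norm c \<le> 1 \<and> cball c s \<subseteq> poly_cone k p)
      \<longleftrightarrow> (\<exists>c. (c, s) \<in> inball_params k p)" for s
    using cball_subset_poly_cone_iff[OF unit] by (auto simp: inball_params_def)
  have "inradius (poly_cone k p) = r"
    unfolding inradius_def in_cone using cr max by (blast intro: Greatest_equality)
  then show thesis using that cr max by blast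
qed

lemma LP_feasible_antimono:
  assumes "l \<le> l'"
  shows "LP_feasible k p u l' \<subseteq> LP_feasible k p u l"
  using assms by (auto simp: LP_feasible_def)

lemma LP_optimal_feasible: "LP_optimal k p u l x z \<Longrightarrow> (x, z) \<in> LP_feasible k p u l"
  by (simp add: LP_optimal_def)

lemma LP_optimal_ge:
  assumes "LP_optimal k p u l x z" and "(y, w) \<in> LP_feasible k p u l"
  shows "w \<le> z"
  using assms unfolding LP_optimal_def by fastforce

lemma LP_optimal_value_antimono:
  assumes "l \<le> l'" and "LP_optimal k p u l x z" and "LP_optimal k p u l' x' z'"
  shows "z' \<le> z"
  using assms LP_feasible_antimono[OF \<open>l \<le> l'\<close>]
  by (blast intro: LP_optimal_ge LP_optimal_feasible)

lemma LP_optimal_imp_constraints_nonempty: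
  assumes "LP_optimal k p u l x z"
  shows "1 \<le> p"
proof (rule ccontr)
  assume "\<not> 1 \<le> p"
  then have "(x, z + 1) \<in> LP_feasible k p u l"
    using LP_optimal_feasible[OF assms] by (simp add: LP_feasible_def)
  then show False using LP_optimal_ge[OF assms] by fastforce
qed

lemma inball_params_subset_LP_feasible:
  fixes k u :: "nat \<Rightarrow> real^'n"
  assumes "\<forall>j<l. norm (u j) \<le> 1"
  shows "inball_params k p \<subseteq> LP_feasible k p u l"
proof clarify
  fix c r assume cr: "(c, r) \<in> inball_params k p"
  then have "norm c \<le> 1" by (simp add: inball_params_def)
  have "\<bar>c $ i\<bar> \<le> 1" for i using component_le_norm_cart[of c i] \<open>norm c \<le> 1\<close> by linarith
  moreover have "u j \<bullet> c \<le> 1" if "j < l" for j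
  proof -
    have "u j \<bullet> c \<le> norm (u j) * norm c" by (rule norm_cauchy_schwarz)
    also have "\<dots> \<le> 1" using assms that \<open>norm c \<le> 1\<close> by (simp add: mult_le_one)
    finally show ?thesis .
  qed
  ultimately show "(c, r) \<in> LP_feasible k p u l"
    using cr by (auto simp: LP_feasible_def inball_params_def abs_le_iff)
qed

lemma LP_feasible_normalized_in_inball_params:
  assumes "(x, z) \<in> LP_feasible k p u l" and "x \<noteq> 0" and "0 \<le> z"
  shows "(x /\<^sub>R norm x, z / norm x) \<in> inball_params k p"
proof -
  have "z / norm x \<le> k i \<bullet> (x /\<^sub>R norm x)" if "i \<in> {1..p}" for i
  proof -
    have "z \<le> k i \<bullet> x" using assms(1) that by (simp add: LP_feasible_def)
    then have "z / norm x \<le> (k i \<bullet> x) / norm x" by (simp add: divide_right_mono)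
    then show ?thesis by (simp add: divide_inverse mult.commute)
  qed
  then show ?thesis using assms by (simp add: inball_params_def)
qed

theorem proposition3:
  fixes k :: "nat \<Rightarrow> real^'n" and p :: nat
    and xs :: "nat \<Rightarrow> real^'n" and zs :: "nat \<Rightarrow> real"
  assumes unit: "\<forall>i\<in>{1..p}. norm (k i) = 1"
    and int_ne: "interior (poly_cone k p) \<noteq> {}"
    and opt: "\<forall>l. LP_optimal k p (\<lambda>j. xs j /\<^sub>R norm (xs j)) l (xs l) (zs l)"
  shows "(\<forall>l. zs (Suc l) \<le> zs l)
    \<and> (\<forall>l. inradius (poly_cone k p) \<le> zs l)
    \<and> (\<forall>m n'. inradius (poly_cone k p) \<le> zs m
              \<and> zs n' / norm (xs n') \<le> inradius (poly_cone k p))"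
proof -
  define u where "u = (\<lambda>j. xs j /\<^sub>R norm (xs j))"
  let ?r = "inradius (poly_cone k p)"
  have opt_u: "LP_optimal k p u l (xs l) (zs l)" for l using opt by (simp add: u_def)
  obtain c where c: "(c, ?r) \<in> inball_params k p"
    and max: "\<And>c' r. (c', r) \<in> inball_params k p \<Longrightarrow> r \<le> ?r"
    using inradius_attained[OF unit LP_optimal_imp_constraints_nonempty[OF opt_u]] by blast
  have decreasing: "zs (Suc l) \<le> zs l" for l
    by (rule LP_optimal_value_antimono[OF _ opt_u opt_u]) simp
  have "norm (u j) \<le> 1" for j by (simp add: u_def norm_sgn flip: sgn_div_norm)
  then have "(c, ?r) \<in> LP_feasible k p u l" for l
    using inball_params_subset_LP_feasible c by blast
  then have lower: "?r \<le> zs l" for l using LP_optimal_ge[OF opt_u] by blast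
  have upper: "zs l / norm (xs l) \<le> ?r" for l
  proof (cases "xs l \<noteq> 0 \<and> 0 \<le> zs l")
    case True
    then show ?thesis
      using LP_feasible_normalized_in_inball_params[OF LP_optimal_feasible[OF opt_u]] max
      by blast
  next
    case False
    then have "zs l / norm (xs l) \<le> 0" by (auto intro: divide_nonpos_nonneg)
    moreover have "0 \<le> ?r" using c by (simp add: inball_params_def)
    ultimately show ?thesis by linarith
  qed
  show ?thesis using decreasing lower upper by blast
qed

end
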